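(* For every $0<\delta\le1$ and $0<\epsilon\le1$ there exist $n$, $m$, a preference profile $\sigma$, and two distributions $\mathcal{D}_1,\mathcal{D}_2$ supported on $[0,1]$ with total variation distance at most $\epsilon$ such that every alternative $j$ maximizing $\mathbb{E}_{\mathcal{D}_1}[\mathrm{sw}(j,u)]$ at $\sigma$ satisfies $\mathbb{E}_{\mathcal{D}_2}[\mathrm{sw}(j,u)]<\delta\max_{k\in A}\mathbb{E}_{\mathcal{D}_2}[\mathrm{sw}(k,u)]$; i.e., the expected-welfare-maximizing rule for $\mathcal{D}_1$ is not a $\delta$-expected-welfare-maximizing rule for $\mathcal{D}_2$.
   Context: There are $n$ voters and $m$ alternatives $A=\{1,\dots,m\}$. A preference profile $\sigma$ consists of a ranking of $A$ for each voter. Given a distribution $\mathcal{D}$ and profile $\sigma$, a random utility profile $u$ consistent with $\sigma$ is generated as follows: independently for each voter $i$, draw $m$ i.i.d. samples from $\mathcal{D}$ and assign them, from highest to lowest, to the alternatives in the order of voter $i$'s ranking. The social welfare of $j$ is $\mathrm{sw}(j,u)=\sum_i u_{ij}$; $\mathbb{E}_{\mathcal{D}}$ is expectation over $u$ generated with $\mathcal{D}$. *)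

theory Defs
  imports "HOL-Probability.Probability"
begin

text \<open>Alternatives are 0,...,m-1 (the paper's 1..m, shifted); voters are 0,...,n-1.
  A ranking is a list of all alternatives without repetition, best first.\<close>

definition is_profile :: "nat \<Rightarrow> nat \<Rightarrow> (nat \<Rightarrow> nat list) \<Rightarrow> bool" where
  "is_profile n m \<sigma> \<longleftrightarrow> (\<forall>i<n. distinct (\<sigma> i) \<and> set (\<sigma> i) = {..<m})"

definition distr_on01 :: "real measure \<Rightarrow> bool" where
  "distr_on01 D \<longleftrightarrow> prob_space D \<and> sets D = sets borel \<and> measure D {0..1} = 1"

definition tv_dist :: "real measure \<Rightarrow> real measure \<Rightarrow> real" where
  "tv_dist D1 D2 = (SUP A \<in> sets borel. \<bar>measure D1 A - measure D2 A\<bar>)"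

definition kth_largest :: "nat \<Rightarrow> (nat \<Rightarrow> real) \<Rightarrow> nat \<Rightarrow> real" where
  "kth_largest m x k = rev (sort (map x [0..<m])) ! k"

definition rank_pos :: "(nat \<Rightarrow> nat list) \<Rightarrow> nat \<Rightarrow> nat \<Rightarrow> nat" where
  "rank_pos \<sigma> i j = (THE k. k < length (\<sigma> i) \<and> \<sigma> i ! k = j)"

text \<open>Utility profile from samples \<omega> i (voter i's m samples): the samples are assigned
  from highest to lowest to alternatives in the order of voter i's ranking.\<close>
definition utility :: "nat \<Rightarrow> (nat \<Rightarrow> nat list) \<Rightarrow> (nat \<Rightarrow> nat \<Rightarrow> real) \<Rightarrow> nat \<Rightarrow> nat \<Rightarrow> real" where
  "utility m \<sigma> \<omega> i j = kth_largest m (\<omega> i) (rank_pos \<sigma> i j)"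

definition sw :: "nat \<Rightarrow> nat \<Rightarrow> (nat \<Rightarrow> nat list) \<Rightarrow> (nat \<Rightarrow> nat \<Rightarrow> real) \<Rightarrow> nat \<Rightarrow> real" where
  "sw n m \<sigma> \<omega> j = (\<Sum>i<n. utility m \<sigma> \<omega> i j)"

definition sample_measure :: "real measure \<Rightarrow> nat \<Rightarrow> nat \<Rightarrow> (nat \<Rightarrow> nat \<Rightarrow> real) measure" where
  "sample_measure D n m = PiM {..<n} (\<lambda>_. PiM {..<m} (\<lambda>_. D))"

definition exp_sw :: "real measure \<Rightarrow> nat \<Rightarrow> nat \<Rightarrow> (nat \<Rightarrow> nat list) \<Rightarrow> nat \<Rightarrow> real" where
  "exp_sw D n m \<sigma> j = (\<integral>\<omega>. sw n m \<sigma> \<omega> j \<partial>sample_measure D n m)"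

end

theory Submission
  imports Defs
begin

text \<open>Two voters rank three alternatives in opposite orders, so alternative 1 is the middle choice
  of both and the expected welfare of alternative j is E(j) + E(2 - j), where E(k) is the expected
  k-th largest of three samples. Both distributions put mass 1 - p on c = p^2 and differ only in
  where the remaining mass p sits, so their total variation distance is at most p. If it sits at 0,
  the middle sample is c unless two samples are 0, which costs only O(p^2), while the best and
  worst samples together lose about 3pc, so alternative 1 is the unique maximiser. If it sits
  at 1, the best sample is 1 with probability about 3p, so alternatives 0 and 2 get welfare of
  order p, whereas the middle sample is 1 only with probability O(p^2).\<close>

definition two_point :: "real \<Rightarrow> real \<Rightarrow> real \<Rightarrow> real measure" where
  "two_point a b q = distr (measure_pmf (pmf_of_list [(a, 1 - q), (b, q)])) borel id"

lemma sets_two_point [simp, measurable_cong]: "sets (two_point a b q) = sets borel"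
  by (simp add: two_point_def)

lemma space_two_point [simp]: "space (two_point a b q) = UNIV"
  by (simp add: two_point_def)

lemma prob_space_two_point: "prob_space (two_point a b q)"
  unfolding two_point_def by (auto intro: prob_space.prob_space_distr prob_space_measure_pmf)

lemma measure_two_point:
  assumes "0 \<le> q" "q \<le> 1" "A \<in> sets borel"
  shows "measure (two_point a b q) A = (if a \<in> A then 1 - q else 0) + (if b \<in> A then q else 0)"
proof -
  have "pmf_of_list_wf [(a, 1 - q), (b, q)]"
    using assms by (auto simp: pmf_of_list_wf_def)
  then show ?thesis
    using assms unfolding two_point_def by (simp add: measure_distr measure_pmf_of_list)
qed

lemma distr_on01_two_point:
  assumes "0 \<le> q" "q \<le> 1" "a \<in> {0..1}" "b \<in> {0..1}"
  shows "distr_on01 (two_point a b q)"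
  using assms by (simp add: distr_on01_def prob_space_two_point measure_two_point)

lemma tv_dist_two_point_le:
  assumes "0 \<le> q" "q \<le> 1"
  shows "tv_dist (two_point a b q) (two_point a b' q) \<le> q"
  unfolding tv_dist_def
proof (rule cSUP_least)
  fix A :: "real set"
  assume "A \<in> sets borel"
  then show "\<bar>measure (two_point a b q) A - measure (two_point a b' q) A\<bar> \<le> q"
    using assms by (simp add: measure_two_point)
qed auto

lemma integral_finite_support:
  assumes "prob_space M" "finite S" "\<And>s. s \<in> S \<Longrightarrow> {s} \<in> sets M" "measure M S = 1"
    and g: "g \<in> borel_measurable M"
  shows "integrable M g" "integral\<^sup>L M g = (\<Sum>s\<in>S. g s * measure M {s})"
proof -
  interpret prob_space M by fact
  define h where "h x = (\<Sum>s\<in>S. g s * indicator {s} x)" for x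
  have "S = (\<Union>s\<in>S. {s})" by simp
  also have "\<dots> \<in> sets M" using assms(2,3) by (intro sets.finite_UN) auto
  finally have "AE x in M. x \<in> S"
    using assms(4) by (simp add: AE_in_set_eq_1)
  then have gh: "AE x in M. g x = h x"
    by eventually_elim (use \<open>finite S\<close> in \<open>simp add: h_def indicator_def sum.delta'\<close>)
  have summand: "integrable M (\<lambda>x. g s * indicator {s} x)" if "s \<in> S" for s
    using assms(3)[OF that] by (simp add: emeasure_eq_measure)
  then have h: "integrable M h"
    unfolding h_def by (rule Bochner_Integration.integrable_sum)
  then show "integrable M g"
    using integrable_cong_AE[OF g borel_measurable_integrable[OF h] gh] by simp
  have "integral\<^sup>L M g = integral\<^sup>L M h"
    using g h gh by (intro integral_cong_AE) (auto dest: borel_measurable_integrable)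
  also have "\<dots> = (\<Sum>s\<in>S. g s * measure M {s})"
    unfolding h_def using summand assms(3) sets.sets_into_space
    by (subst Bochner_Integration.integral_sum) (auto intro!: sum.cong simp: Int_absorb1)
  finally show "integral\<^sup>L M g = (\<Sum>s\<in>S. g s * measure M {s})" .
qed

lemma integral_PiM_finite_support:
  fixes g :: "('i \<Rightarrow> 'a) \<Rightarrow> real"
  assumes "finite I" "prob_space D" "finite S" "\<And>s. s \<in> S \<Longrightarrow> {s} \<in> sets D" "measure D S = 1"
    and g: "g \<in> borel_measurable (PiM I (\<lambda>_. D))"
  shows "integrable (PiM I (\<lambda>_. D)) g"
    "integral\<^sup>L (PiM I (\<lambda>_. D)) g = (\<Sum>x\<in>PiE I (\<lambda>_. S). g x * (\<Prod>i\<in>I. measure D {x i}))"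
proof -
  interpret D: prob_space D by fact
  interpret finite_product_prob_space "\<lambda>_. D" I
    by unfold_locales fact
  have singleton: "{x} = PiE I (\<lambda>i. {x i})" if "x \<in> PiE I (\<lambda>_. S)" for x
    using that by (simp add: PiE_iff PiE_singleton)
  have "measure (PiM I (\<lambda>_. D)) {x} = (\<Prod>i\<in>I. measure D {x i})" if "x \<in> PiE I (\<lambda>_. S)" for x
    using that assms(4) by (subst singleton[OF that]) (auto intro!: finite_measure_PiM_emb)
  moreover have "{x} \<in> sets (PiM I (\<lambda>_. D))" if "x \<in> PiE I (\<lambda>_. S)" for x
    using that assms(1,4) by (subst singleton[OF that]) (auto intro!: sets_PiM_I_finite)
  moreover have "S \<in> sets D"
    using assms(3,4) sets.finite_UN[of S "\<lambda>s. {s}" D] by simp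
  then have "measure (PiM I (\<lambda>_. D)) (PiE I (\<lambda>_. S)) = 1"
    using assms(5) by (simp add: finite_measure_PiM_emb)
  ultimately show "integrable (PiM I (\<lambda>_. D)) g"
    "integral\<^sup>L (PiM I (\<lambda>_. D)) g = (\<Sum>x\<in>PiE I (\<lambda>_. S). g x * (\<Prod>i\<in>I. measure D {x i}))"
    using integral_finite_support[OF prob_space_PiM[OF assms(2)] finite_PiE[OF assms(1,3)] _ _ g]
    by simp_all
qed

lemma integral_PiM_component:
  fixes f :: "'a \<Rightarrow> real"
  assumes "prob_space N" "i \<in> I" "integrable N f"
  shows "integrable (PiM I (\<lambda>_. N)) (\<lambda>\<omega>. f (\<omega> i))"
    "(\<integral>\<omega>. f (\<omega> i) \<partial>PiM I (\<lambda>_. N)) = integral\<^sup>L N f"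
proof -
  have component: "distr (PiM I (\<lambda>_. N)) N (\<lambda>\<omega>. \<omega> i) = N"
    using assms(1,2) by (rule distr_PiM_component)
  have "(\<lambda>\<omega>. \<omega> i) \<in> measurable (PiM I (\<lambda>_. N)) N"
    using assms(2) by (rule measurable_component_singleton)
  note * = this borel_measurable_integrable[OF assms(3)]
  show "integrable (PiM I (\<lambda>_. N)) (\<lambda>\<omega>. f (\<omega> i))"
    using integrable_distr_eq[OF *] component assms(3) by simp
  show "(\<integral>\<omega>. f (\<omega> i) \<partial>PiM I (\<lambda>_. N)) = integral\<^sup>L N f"
    using integral_distr[OF *] component by simp
qed

definition exp_kth_largest :: "real measure \<Rightarrow> nat \<Rightarrow> nat \<Rightarrow> real" where
  "exp_kth_largest D m k = (\<integral>x. kth_largest m x k \<partial>PiM {..<m} (\<lambda>_. D))"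

lemma rank_pos_eqI:
  assumes "distinct (\<sigma> i)" "k < length (\<sigma> i)" "\<sigma> i ! k = j"
  shows "rank_pos \<sigma> i j = k"
  unfolding rank_pos_def using assms by (auto simp: nth_eq_iff_index_eq)

lemma rank_pos_less:
  assumes "is_profile n m \<sigma>" "i < n" "j < m"
  shows "rank_pos \<sigma> i j < m"
proof -
  have "distinct (\<sigma> i)" "set (\<sigma> i) = {..<m}"
    using assms(1,2) by (auto simp: is_profile_def)
  moreover from this have "length (\<sigma> i) = m"
    by (metis card_lessThan distinct_card)
  moreover obtain k where "k < length (\<sigma> i)" "\<sigma> i ! k = j"
    using assms(3) \<open>set (\<sigma> i) = {..<m}\<close> by (metis in_set_conv_nth lessThan_iff)
  ultimately show ?thesis
    using rank_pos_eqI by metis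
qed

lemma exp_sw_eq_sum_exp_kth_largest:
  assumes "prob_space D" "is_profile n m \<sigma>" "j < m"
    and integrable: "\<And>k. k < m \<Longrightarrow> integrable (PiM {..<m} (\<lambda>_. D)) (\<lambda>x. kth_largest m x k)"
  shows "exp_sw D n m \<sigma> j = (\<Sum>i<n. exp_kth_largest D m (rank_pos \<sigma> i j))"
proof -
  let ?N = "PiM {..<m} (\<lambda>_. D)"
  have N: "prob_space ?N"
    using assms(1) by (rule prob_space_PiM)
  have voter: "integrable (PiM {..<n} (\<lambda>_. ?N)) (\<lambda>\<omega>. kth_largest m (\<omega> i) (rank_pos \<sigma> i j))"
    "(\<integral>\<omega>. kth_largest m (\<omega> i) (rank_pos \<sigma> i j) \<partial>PiM {..<n} (\<lambda>_. ?N))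
       = exp_kth_largest D m (rank_pos \<sigma> i j)"
    if "i < n" for i
    using integral_PiM_component[where I="{..<n}", OF N _
        integrable[OF rank_pos_less[OF assms(2) that assms(3)]]] that
    by (simp_all add: exp_kth_largest_def)
  have "exp_sw D n m \<sigma> j
      = (\<integral>\<omega>. (\<Sum>i<n. kth_largest m (\<omega> i) (rank_pos \<sigma> i j)) \<partial>PiM {..<n} (\<lambda>_. ?N))"
    by (simp add: exp_sw_def sample_measure_def sw_def utility_def)
  also have "\<dots> = (\<Sum>i<n. exp_kth_largest D m (rank_pos \<sigma> i j))"
    using voter by (subst Bochner_Integration.integral_sum) auto
  finally show ?thesis .
qed

definition opposite_rankings :: "nat \<Rightarrow> nat \<Rightarrow> nat list" where
  "opposite_rankings m i = (if i = 0 then [0..<m] else rev [0..<m])"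

lemma is_profile_opposite_rankings: "is_profile 2 m (opposite_rankings m)"
  by (simp add: is_profile_def opposite_rankings_def atLeast0LessThan)

lemma rank_pos_opposite_rankings:
  assumes "j < m"
  shows "rank_pos (opposite_rankings m) 0 j = j" "rank_pos (opposite_rankings m) 1 j = m - 1 - j"
  using assms by (auto intro!: rank_pos_eqI simp: opposite_rankings_def rev_nth)

lemma exp_sw_opposite_rankings:
  assumes "prob_space D" "j < m"
    and "\<And>k. k < m \<Longrightarrow> integrable (PiM {..<m} (\<lambda>_. D)) (\<lambda>x. kth_largest m x k)"
  shows "exp_sw D 2 m (opposite_rankings m) j = exp_kth_largest D m j + exp_kth_largest D m (m - 1 - j)"
  using exp_sw_eq_sum_exp_kth_largest[OF assms(1) is_profile_opposite_rankings assms(2,3)]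
  by (simp add: numeral_2_eq_2 rank_pos_opposite_rankings[OF assms(2), unfolded One_nat_def])

lemma sum_PiE_lessThan_3:
  "(\<Sum>x\<in>PiE {..<3::nat} (\<lambda>_. S). f x) = (\<Sum>u\<in>S. \<Sum>v\<in>S. \<Sum>w\<in>S. f (restrict ((!) [u, v, w]) {..<3}))"
proof -
  have less_3: "i < 3 \<longleftrightarrow> i = 0 \<or> i = 1 \<or> i = (2::nat)" for i
    by auto
  have inverse: "restrict ((!) [x 0, x 1, x 2]) {..<3} = x" if "x \<in> PiE {..<3::nat} (\<lambda>_. S)" for x
    using that by (auto simp: PiE_iff extensional_def fun_eq_iff less_3)
  have "(\<Sum>x\<in>PiE {..<3::nat} (\<lambda>_. S). f x)
      = (\<Sum>(u, v, w)\<in>S \<times> S \<times> S. f (restrict ((!) [u, v, w]) {..<3}))"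
    by (rule sum.reindex_bij_witness[of _ "\<lambda>(u, v, w). restrict ((!) [u, v, w]) {..<3}"
          "\<lambda>x. (x 0, x 1, x 2)"])
      (simp_all only: prod.case inverse, auto simp: PiE_iff less_3)
  then show ?thesis
    by (simp add: sum.cartesian_product)
qed

lemma rev_sort_3:
  "rev (sort [a, b, c :: 'a :: linorder]) = [max a (max b c), max (min a b) (min (max a b) c), min a (min b c)]"
  by (cases "a \<le> b"; cases "b \<le> c"; cases "a \<le> c") (auto simp: max_def min_def)

lemma kth_largest_3: "kth_largest 3 x k = rev (sort [x 0, x 1, x 2]) ! k"
proof -
  have "[0..<3] = [0, 1, 2::nat]"
    by (simp add: numeral_3_eq_3)
  then show ?thesis
    by (simp add: kth_largest_def)
qed

lemma borel_measurable_kth_largest_3: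
  assumes "sets D = sets borel" "k < 3"
  shows "(\<lambda>x. kth_largest 3 x k) \<in> borel_measurable (PiM {..<3} (\<lambda>_. D))"
proof -
  have "(\<lambda>x. x i) \<in> measurable (PiM {..<3} (\<lambda>_. D)) D" if "i < 3" for i :: nat
    using that by (intro measurable_component_singleton) simp
  then have coordinate: "(\<lambda>x. x i) \<in> borel_measurable (PiM {..<3} (\<lambda>_. D))" if "i < 3" for i :: nat
    using that by (simp add: measurable_cong_sets[OF refl assms(1)])
  have "k = 0 \<or> k = 1 \<or> k = 2"
    using assms(2) by auto
  then show ?thesis
    unfolding kth_largest_3 rev_sort_3
    by (elim disjE) (simp_all add: coordinate borel_measurable_max borel_measurable_min)
qed

lemma exp_kth_largest_3_finite_support:
  assumes "prob_space D" "sets D = sets borel" "finite S" "measure D S = 1" "k < 3"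
  shows "integrable (PiM {..<3} (\<lambda>_. D)) (\<lambda>x. kth_largest 3 x k)"
    "exp_kth_largest D 3 k = (\<Sum>u\<in>S. \<Sum>v\<in>S. \<Sum>w\<in>S.
       rev (sort [u, v, w]) ! k * (measure D {u} * measure D {v} * measure D {w}))"
proof -
  note finite_support = integral_PiM_finite_support[where I="{..<3}", OF _ assms(1,3) _ assms(4)
      borel_measurable_kth_largest_3[OF assms(2,5)]]
  show "integrable (PiM {..<3} (\<lambda>_. D)) (\<lambda>x. kth_largest 3 x k)"
    using finite_support(1) assms(2) by simp
  have "exp_kth_largest D 3 k
      = (\<Sum>x\<in>PiE {..<3} (\<lambda>_. S). kth_largest 3 x k * (\<Prod>i<3. measure D {x i}))"
    using finite_support(2) assms(2) by (simp add: exp_kth_largest_def)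
  also have "\<dots> = (\<Sum>u\<in>S. \<Sum>v\<in>S. \<Sum>w\<in>S. kth_largest 3 (restrict ((!) [u, v, w]) {..<3}) k *
      (\<Prod>i<3. measure D {restrict ((!) [u, v, w]) {..<3} i}))"
    by (rule sum_PiE_lessThan_3)
  also have "\<dots> = (\<Sum>u\<in>S. \<Sum>v\<in>S. \<Sum>w\<in>S.
       rev (sort [u, v, w]) ! k * (measure D {u} * measure D {v} * measure D {w}))"
  proof -
    have "{..<3} = {0, 1, 2::nat}"
      by auto
    then show ?thesis
      by (simp add: kth_largest_3 mult.assoc)
  qed
  finally show "exp_kth_largest D 3 k = (\<Sum>u\<in>S. \<Sum>v\<in>S. \<Sum>w\<in>S.
       rev (sort [u, v, w]) ! k * (measure D {u} * measure D {v} * measure D {w}))" .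
qed

lemma exp_kth_largest_two_point:
  assumes "0 \<le> q" "q \<le> 1" "a \<noteq> b" "k < 3"
  shows "integrable (PiM {..<3} (\<lambda>_. two_point a b q)) (\<lambda>x. kth_largest 3 x k)"
    "exp_kth_largest (two_point a b q) 3 k = (\<Sum>u\<in>{a, b}. \<Sum>v\<in>{a, b}. \<Sum>w\<in>{a, b}.
       rev (sort [u, v, w]) ! k * ((if u = a then 1 - q else q) * (if v = a then 1 - q else q) *
         (if w = a then 1 - q else q)))"
proof -
  note finite_support = exp_kth_largest_3_finite_support[where D="two_point a b q" and S="{a, b}",
      OF prob_space_two_point sets_two_point _ _ assms(4)]
  have "measure (two_point a b q) {a, b} = 1"
    using assms by (simp add: measure_two_point)
  moreover have "measure (two_point a b q) {u} = (if u = a then 1 - q else q)" if "u \<in> {a, b}" for u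
    using assms that by (auto simp: measure_two_point)
  ultimately show "integrable (PiM {..<3} (\<lambda>_. two_point a b q)) (\<lambda>x. kth_largest 3 x k)"
    "exp_kth_largest (two_point a b q) 3 k = (\<Sum>u\<in>{a, b}. \<Sum>v\<in>{a, b}. \<Sum>w\<in>{a, b}.
       rev (sort [u, v, w]) ! k * ((if u = a then 1 - q else q) * (if v = a then 1 - q else q) *
         (if w = a then 1 - q else q)))"
    using finite_support by (auto intro!: sum.cong)
qed

lemma exp_kth_largest_two_point_rare_low:
  assumes "0 \<le> q" "q \<le> 1" "b < a"
  shows "exp_kth_largest (two_point a b q) 3 0 = b + (a - b) * (1 - q^3)"
    "exp_kth_largest (two_point a b q) 3 1 = b + (a - b) * ((1 - q)^3 + 3 * (1 - q)^2 * q)"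
    "exp_kth_largest (two_point a b q) 3 2 = b + (a - b) * (1 - q)^3"
proof -
  have order: "a \<noteq> b" "\<not> a \<le> b" "b \<le> a"
    using assms(3) by auto
  note sum = exp_kth_largest_two_point(2)[OF assms(1,2) order(1)]
  show "exp_kth_largest (two_point a b q) 3 0 = b + (a - b) * (1 - q^3)"
    using sum[of 0] order by simp (simp add: algebra_simps power3_eq_cube)
  show "exp_kth_largest (two_point a b q) 3 1 = b + (a - b) * ((1 - q)^3 + 3 * (1 - q)^2 * q)"
    using sum[of 1] order by simp (simp add: algebra_simps power2_eq_square power3_eq_cube)
  show "exp_kth_largest (two_point a b q) 3 2 = b + (a - b) * (1 - q)^3"
    using sum[of 2] order by simp (simp add: algebra_simps power3_eq_cube)
qed

lemma exp_kth_largest_two_point_rare_high: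
  assumes "0 \<le> q" "q \<le> 1" "a < b"
  shows "exp_kth_largest (two_point a b q) 3 0 = a + (b - a) * (1 - (1 - q)^3)"
    "exp_kth_largest (two_point a b q) 3 1 = a + (b - a) * (3 * q^2 * (1 - q) + q^3)"
    "exp_kth_largest (two_point a b q) 3 2 = a + (b - a) * q^3"
proof -
  have order: "a \<noteq> b" "a \<le> b" "\<not> b \<le> a"
    using assms(3) by auto
  note sum = exp_kth_largest_two_point(2)[OF assms(1,2) order(1)]
  show "exp_kth_largest (two_point a b q) 3 0 = a + (b - a) * (1 - (1 - q)^3)"
    using sum[of 0] order by simp (simp add: algebra_simps power3_eq_cube)
  show "exp_kth_largest (two_point a b q) 3 1 = a + (b - a) * (3 * q^2 * (1 - q) + q^3)"
    using sum[of 1] order by simp (simp add: algebra_simps power2_eq_square power3_eq_cube)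
  show "exp_kth_largest (two_point a b q) 3 2 = a + (b - a) * q^3"
    using sum[of 2] order by simp (simp add: algebra_simps power3_eq_cube)
qed

lemma exp_sw_two_point_opposite_rankings:
  assumes "0 \<le> q" "q \<le> 1" "a \<noteq> b" "j < 3"
  shows "exp_sw (two_point a b q) 2 3 (opposite_rankings 3) j
    = exp_kth_largest (two_point a b q) 3 j + exp_kth_largest (two_point a b q) 3 (2 - j)"
  using exp_sw_opposite_rankings[OF prob_space_two_point assms(4)]
    exp_kth_largest_two_point(1)[OF assms(1-3)] by simp

lemma exp_sw_two_point_rare_low_maximiser:
  fixes a b q :: real
  defines "W \<equiv> exp_sw (two_point a b q) 2 3 (opposite_rankings 3)"
  assumes "0 < q" "q < 1/2" "b < a" "j < 3" "\<forall>k<3. W k \<le> W j"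
  shows "j = 1"
proof (rule ccontr)
  assume "j \<noteq> 1"
  let ?E = "exp_kth_largest (two_point a b q) 3"
  have "j = 0 \<or> j = 2"
    using assms(5) \<open>j \<noteq> 1\<close> by auto
  then have "W j = ?E 0 + ?E 2"
    using exp_sw_two_point_opposite_rankings[of q a b] assms(2-5) by (auto simp: W_def)
  moreover have "W 1 = 2 * ?E 1"
    using exp_sw_two_point_opposite_rankings[of q a b 1] assms(2-4) by (simp add: W_def)
  moreover have "2 * ?E 1 - (?E 0 + ?E 2) = (a - b) * (3 * q * (1 - q) * (1 - 2 * q))"
    using exp_kth_largest_two_point_rare_low[of q b a] assms(2-4)
    by (simp add: algebra_simps power2_eq_square power3_eq_cube)
  moreover have "0 < (a - b) * (3 * q * (1 - q) * (1 - 2 * q))"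
    using assms(2-4) by simp
  moreover have "W 1 \<le> W j"
    using assms(6) by simp
  ultimately show False
    by linarith
qed

lemma exp_sw_two_point_rare_high_middle_small:
  assumes "0 < p" "p \<le> 1/10" "10 * p \<le> \<delta>"
  shows "exp_sw (two_point (p^2) 1 p) 2 3 (opposite_rankings 3) 1
    < \<delta> * exp_sw (two_point (p^2) 1 p) 2 3 (opposite_rankings 3) 0"
proof -
  let ?E = "exp_kth_largest (two_point (p^2) 1 p) 3"
  have p: "0 \<le> p" "p \<le> 1" "p^2 < 1"
    using assms by (auto simp: power_less_one_iff)
  note E = exp_kth_largest_two_point_rare_high[OF p]
  have "p^3 \<le> p^2"
    using p by (simp add: power3_eq_cube power2_eq_square mult_left_le)
  then have "(1 - p^2) * (3 * p^2 - 2 * p^3) \<le> 3 * p^2 - 2 * p^3"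
    using p zero_le_power2[of p] by (intro mult_left_le_one_le) linarith+
  moreover have "?E 1 = p^2 + (1 - p^2) * (3 * p^2 - 2 * p^3)"
    using E(2) by (simp add: algebra_simps power2_eq_square power3_eq_cube)
  ultimately have middle: "?E 1 \<le> 4 * p^2"
    using zero_le_power[OF p(1), of 3] by linarith
  have "p * 2 \<le> p * (3 - 3 * p + p^2)"
    using assms zero_le_power2[of p] by (intro mult_left_mono) linarith+
  then have "2 * p \<le> 1 - (1 - p)^3"
    by (simp add: algebra_simps power2_eq_square power3_eq_cube)
  moreover have "1 - (1 - p)^3 \<le> ?E 0"
    using E(1) p by (simp add: algebra_simps)
  ultimately have top: "2 * p \<le> ?E 0"
    by linarith
  have bottom: "0 \<le> ?E 2"
    using E(3) p by simp
  have "exp_sw (two_point (p^2) 1 p) 2 3 (opposite_rankings 3) 1 = 2 * ?E 1"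
    using exp_sw_two_point_opposite_rankings[of p "p^2" 1 1] p by simp
  also have "\<dots> < 10 * p * (2 * p)"
    using middle mult_pos_pos[OF assms(1) assms(1)] by (simp add: power2_eq_square)
  also have "\<dots> \<le> \<delta> * (?E 0 + ?E 2)"
    using top bottom assms by (intro mult_mono) auto
  also have "?E 0 + ?E 2 = exp_sw (two_point (p^2) 1 p) 2 3 (opposite_rankings 3) 0"
    using exp_sw_two_point_opposite_rankings[of p "p^2" 1 0] p by simp
  finally show ?thesis .
qed

theorem theorem11:
  fixes \<delta> \<epsilon> :: real
  assumes "0 < \<delta>" "\<delta> \<le> 1" "0 < \<epsilon>" "\<epsilon> \<le> 1"
  shows "\<exists>(n::nat) (m::nat) \<sigma> D1 D2.
           0 < n \<and> 0 < m \<and> is_profile n m \<sigma> \<and>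
           distr_on01 D1 \<and> distr_on01 D2 \<and> tv_dist D1 D2 \<le> \<epsilon> \<and>
           (\<forall>j<m. (\<forall>k<m. exp_sw D1 n m \<sigma> k \<le> exp_sw D1 n m \<sigma> j) \<longrightarrow>
                   exp_sw D2 n m \<sigma> j < \<delta> * Max ((\<lambda>k. exp_sw D2 n m \<sigma> k) ` {..<m}))"
proof -
  define p where "p = min \<epsilon> \<delta> / 10"
  have p: "0 < p" "p \<le> 1/10" "p \<le> \<epsilon>" "10 * p \<le> \<delta>"
    using assms by (auto simp: p_def)
  then have "p^2 \<in> {0..1}"
    by (simp add: power_le_one)
  let ?W1 = "exp_sw (two_point (p^2) 0 p) 2 3 (opposite_rankings 3)"
  let ?W2 = "exp_sw (two_point (p^2) 1 p) 2 3 (opposite_rankings 3)"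
  have "?W2 j < \<delta> * Max (?W2 ` {..<3})" if "j < 3" "\<forall>k<3. ?W1 k \<le> ?W1 j" for j
  proof -
    have "j = 1"
      using exp_sw_two_point_rare_low_maximiser[of p 0 "p^2" j] that p by simp
    then have "?W2 j < \<delta> * ?W2 0"
      using exp_sw_two_point_rare_high_middle_small[OF p(1,2,4)] by simp
    also have "\<dots> \<le> \<delta> * Max (?W2 ` {..<3})"
      using assms(1) by (intro mult_left_mono Max_ge) auto
    finally show ?thesis .
  qed
  moreover have "tv_dist (two_point (p^2) 0 p) (two_point (p^2) 1 p) \<le> \<epsilon>"
    using tv_dist_two_point_le[of p "p^2" 0 1] p by simp
  ultimately show ?thesis
    using is_profile_opposite_rankings[of 3] distr_on01_two_point[of p "p^2"] \<open>p^2 \<in> {0..1}\<close> p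
    by (intro exI[of _ 2] exI[of _ 3] exI[of _ "opposite_rankings 3"] exI[of _ "two_point (p^2) 0 p"]
        exI[of _ "two_point (p^2) 1 p"]) auto
qed

end
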